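(* Let $n,T,K$ be positive integers. Let $P_1,\ldots,P_T$ be $n\times n$ matrices and let $\hat P_1,\ldots,\hat P_T$ be arbitrary $n\times n$ matrices (estimates of the $P_i$). Define the $T\times T$ matrices $D$ and $\hat D$ by $D_{ij}=\|P_i-P_j\|_F$ and $\hat D_{ij}=\|\hat P_i-\hat P_j\|_F$. Suppose $D$ has rank $K$. Let $V$ (resp. $\hat V$) be a $T\times K$ matrix whose columns are orthonormal eigenvectors of $D$ (resp. $\hat D$) corresponding to its $K$ eigenvalues of largest absolute value. Let $\gamma$ be the smallest absolute value among the $K$ nonzero eigenvalues of $D$ (equivalently, the $K$-th largest eigenvalue of $D$ in absolute value). Then there exists a $K\times K$ orthogonal matrix $\hat O$ such that \[ \|\hat V\hat O-V\|_F^2\le \frac{64T}{\gamma^2}\sum_{i=1}^T\|\hat P_i-P_i\|_F^2 . \]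
   Context: $\|\cdot\|_F$ denotes the Frobenius norm. In the intended application, $P_i$ is the link probability matrix of the $i$-th observed network on a common set of $n$ nodes (node correspondence present) and $\hat P_i$ is an estimate of it obtained from the observed adjacency matrix. *)

theory Defs
  imports "HOL-Analysis.Analysis"
begin

definition frob :: "real^'n^'m \<Rightarrow> real" where
  "frob A = sqrt (\<Sum>i\<in>UNIV. \<Sum>j\<in>UNIV. (A $ i $ j)\<^sup>2)"

definition diag_mat :: "('t \<Rightarrow> real) \<Rightarrow> real^'t^'t" where
  "diag_mat \<mu> = (\<chi> i j. if i = j then \<mu> i else 0)"

definition dist_mat :: "('t \<Rightarrow> real^'n^'n) \<Rightarrow> real^'t^'t" where
  "dist_mat P = (\<chi> i j. frob (P i - P j))"

definition is_eigenvalue :: "real^'t^'t \<Rightarrow> real \<Rightarrow> bool" where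
  "is_eigenvalue A lam \<longleftrightarrow> (\<exists>v. v \<noteq> 0 \<and> A *v v = lam *\<^sub>R v)"

(* The columns of V (a T x K matrix) are orthonormal eigenvectors of D corresponding
   to its K eigenvalues of largest absolute value (counted with multiplicity):
   V consists of K distinct columns (indices e) of an orthonormal eigenbasis U of D,
   D = U diag(mu) U^T, and every eigenvalue not selected has absolute value at most
   that of every selected one. *)
definition top_abs_eigvecs :: "real^'t^'t \<Rightarrow> real^'k^'t \<Rightarrow> bool" where
  "top_abs_eigvecs D V \<longleftrightarrow>
     (\<exists>(U::real^'t^'t) (\<mu>::'t \<Rightarrow> real) (e::'k \<Rightarrow> 't).
        orthogonal_matrix U \<and> D = U ** diag_mat \<mu> ** transpose U \<and> inj e \<and>
        (\<forall>r c. V $ r $ c = U $ r $ e c) \<and>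
        (\<forall>c t. t \<notin> range e \<longrightarrow> \<bar>\<mu> t\<bar> \<le> \<bar>\<mu> (e c)\<bar>))"

end

theory Submission
  imports Defs
begin

text \<open>
  Write \<open>D = U diag(\<mu>) U\<^sup>T\<close>, \<open>D' = U' diag(\<mu>') U'\<^sup>T\<close> and \<open>B = U'\<^sup>T U\<close>. Then
  \<open>\<parallel>D' - D\<parallel>\<^sup>2 = \<Sum>\<^sub>j\<^sub>t (\<mu>'\<^sub>j - \<mu>\<^sub>t)\<^sup>2 B\<^sub>j\<^sub>t\<^sup>2\<close>. Since \<open>D\<close> has rank \<open>K\<close>, \<open>\<mu>\<close> vanishes off the
  selected indices, so the entries of \<open>B\<close> coupling a selected index of one side to an unselected
  index of the other sit on an eigenvalue gap of at least \<open>\<gamma>/2\<close> (Davis-Kahan); hence their squared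
  mass \<open>X\<close> is at most \<open>4\<parallel>D' - D\<parallel>\<^sup>2/\<gamma>\<^sup>2\<close>. The overlap \<open>M = V'\<^sup>T V\<close> is a contraction with
  \<open>\<parallel>M\<parallel>\<^sup>2 = K - X\<close>, and the orthogonal \<open>O\<close> maximising \<open>\<langle>O, M\<rangle>\<close> satisfies
  \<open>\<langle>O, M\<rangle> \<ge> \<parallel>M\<parallel>\<^sup>2\<close>, because first-order optimality against Householder reflections makes
  \<open>O\<^sup>T M\<close> symmetric positive semidefinite. Thus \<open>\<parallel>V' O - V\<parallel>\<^sup>2 = 2K - 2\<langle>O, M\<rangle> \<le> 2X\<close>.
  Finally \<open>\<parallel>D' - D\<parallel>\<^sup>2 \<le> 4T \<Sum>\<^sub>i \<parallel>P'\<^sub>i - P\<^sub>i\<parallel>\<^sup>2\<close> by the reverse triangle inequality.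
\<close>

section \<open>The Frobenius inner product\<close>

lemma inner_matrix:
  "inner (A::real^'n::finite^'m::finite) B = (\<Sum>i\<in>UNIV. \<Sum>j\<in>UNIV. A$i$j * B$i$j)"
  by (simp add: inner_vec_def)

lemma norm_matrix_sq:
  "(norm (A::real^'n::finite^'m::finite))\<^sup>2 = (\<Sum>i\<in>UNIV. \<Sum>j\<in>UNIV. (A$i$j)\<^sup>2)"
  unfolding power2_norm_eq_inner by (simp add: inner_matrix power2_eq_square)

lemma frob_eq_norm: "frob A = norm A"
  by (simp add: frob_def norm_eq_sqrt_inner inner_matrix power2_eq_square)

lemma inner_matrix_mul_left:
  fixes A :: "real^'n::finite^'m::finite" and B :: "real^'p::finite^'n" and C :: "real^'p^'m"
  shows "inner (A ** B) C = inner B (transpose A ** C)"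
proof -
  have "inner (A ** B) C = (\<Sum>i\<in>UNIV. \<Sum>j\<in>UNIV. \<Sum>k\<in>UNIV. A$i$k * B$k$j * C$i$j)"
    by (simp add: inner_matrix matrix_matrix_mult_def sum_distrib_right)
  also have "\<dots> = (\<Sum>j\<in>UNIV. \<Sum>i\<in>UNIV. \<Sum>k\<in>UNIV. A$i$k * B$k$j * C$i$j)"
    by (rule sum.swap)
  also have "\<dots> = (\<Sum>j\<in>UNIV. \<Sum>k\<in>UNIV. \<Sum>i\<in>UNIV. A$i$k * B$k$j * C$i$j)"
    by (rule sum.cong[OF refl], rule sum.swap)
  also have "\<dots> = (\<Sum>k\<in>UNIV. \<Sum>j\<in>UNIV. \<Sum>i\<in>UNIV. A$i$k * B$k$j * C$i$j)"
    by (rule sum.swap)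
  also have "\<dots> = inner B (transpose A ** C)"
    by (simp add: inner_matrix matrix_matrix_mult_def transpose_def sum_distrib_left mult_ac)
  finally show ?thesis .
qed

lemma inner_self_matrix: "inner A A = trace (transpose A ** (A::real^'n::finite^'m::finite))"
  by (simp add: inner_matrix trace_def matrix_matrix_mult_def transpose_def) (rule sum.swap)

lemma inner_matrix_mult_vector:
  "inner (A *v x) y = inner x (transpose A *v (y::real^'m::finite))"
  by (metis dot_lmul_matrix vector_transpose_matrix)

lemma norm_orthonormal_columns_mult:
  assumes "transpose A ** A = mat 1"
  shows "norm (A *v x) = norm (x::real^'n::finite)"
proof -
  have "inner (A *v x) (A *v x) = inner x x"
    by (simp add: inner_matrix_mult_vector matrix_vector_mul_assoc assms)
  then show ?thesis by (simp add: norm_eq_sqrt_inner)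
qed

lemma norm_transpose_orthonormal_columns_mult_le:
  fixes A :: "real^'k::finite^'t::finite"
  assumes "transpose A ** A = mat 1"
  shows "norm (transpose A *v y) \<le> norm y"
proof -
  let ?z = "transpose A *v y"
  have "(norm ?z)\<^sup>2 = inner y (A *v ?z)"
    unfolding power2_norm_eq_inner by (metis inner_matrix_mult_vector transpose_transpose)
  also have "\<dots> \<le> norm y * norm (A *v ?z)" by (rule norm_cauchy_schwarz)
  also have "\<dots> = norm y * norm ?z" by (simp only: norm_orthonormal_columns_mult[OF assms])
  finally have "norm ?z * norm ?z \<le> norm y * norm ?z" by (simp add: power2_eq_square)
  then show ?thesis by (cases "norm ?z = 0") (auto simp: mult_le_cancel_right)
qed

lemma orthogonal_matrix_columns_sum:
  assumes "orthogonal_matrix (U::real^'n::finite^'n)"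
  shows "(\<Sum>r\<in>UNIV. U$r$i * U$r$j) = (if i = j then 1 else 0)"
proof -
  have "(transpose U ** U)$i$j = (mat 1 :: real^'n^'n)$i$j"
    using assms by (simp add: orthogonal_matrix_def)
  then show ?thesis by (simp add: matrix_matrix_mult_def transpose_def mat_def)
qed

lemma orthogonal_matrix_rows_sum:
  assumes "orthogonal_matrix (U::real^'n::finite^'n)"
  shows "(\<Sum>k\<in>UNIV. U$i$k * U$j$k) = (if i = j then 1 else 0)"
proof -
  have "(U ** transpose U)$i$j = (mat 1 :: real^'n^'n)$i$j"
    using assms by (simp add: orthogonal_matrix_def)
  then show ?thesis by (simp add: matrix_matrix_mult_def transpose_def mat_def)
qed

lemma sum_square_orthonormal_transform:
  fixes W :: "'j::finite \<Rightarrow> 'a::finite \<Rightarrow> real"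
  assumes "\<And>a a'. (\<Sum>j\<in>UNIV. W j a * W j a') = (if a = a' then 1 else 0)"
  shows "(\<Sum>j\<in>UNIV. (\<Sum>a\<in>UNIV. W j a * x a)\<^sup>2) = (\<Sum>a\<in>UNIV. (x a)\<^sup>2)"
proof -
  have "(\<Sum>j\<in>UNIV. (\<Sum>a\<in>UNIV. W j a * x a)\<^sup>2)
      = (\<Sum>j\<in>UNIV. \<Sum>a\<in>UNIV. \<Sum>a'\<in>UNIV. x a * x a' * (W j a * W j a'))"
    by (simp add: power2_eq_square sum_product algebra_simps)
  also have "\<dots> = (\<Sum>a\<in>UNIV. \<Sum>j\<in>UNIV. \<Sum>a'\<in>UNIV. x a * x a' * (W j a * W j a'))"
    by (rule sum.swap)
  also have "\<dots> = (\<Sum>a\<in>UNIV. \<Sum>a'\<in>UNIV. \<Sum>j\<in>UNIV. x a * x a' * (W j a * W j a'))"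
    by (rule sum.cong[OF refl], rule sum.swap)
  also have "\<dots> = (\<Sum>a\<in>UNIV. \<Sum>a'\<in>UNIV. x a * x a' * (\<Sum>j\<in>UNIV. W j a * W j a'))"
    by (simp add: sum_distrib_left)
  also have "\<dots> = (\<Sum>a\<in>UNIV. (x a)\<^sup>2)"
    by (simp add: assms power2_eq_square if_distrib[of "\<lambda>y. _ * y"] cong: if_cong)
  finally show ?thesis .
qed

section \<open>Spectral decompositions\<close>

lemma spectral_entry:
  fixes U :: "real^'t::finite^'t"
  assumes "D = U ** diag_mat \<mu> ** transpose U"
  shows "D$r$s = (\<Sum>k\<in>UNIV. U$r$k * \<mu> k * U$s$k)"
proof -
  have "(U ** diag_mat \<mu>)$r$k = U$r$k * \<mu> k" for k
    by (simp add: matrix_matrix_mult_def diag_mat_def if_distrib[of "\<lambda>y. _ * y"] cong: if_cong)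
  then show ?thesis
    by (simp add: assms matrix_matrix_mult_def[of "U ** diag_mat \<mu>"] transpose_def)
qed

lemma spectral_mult_column:
  fixes U :: "real^'t::finite^'t"
  assumes "orthogonal_matrix U" "D = U ** diag_mat \<mu> ** transpose U"
  shows "(\<Sum>s\<in>UNIV. D$r$s * U$s$t) = \<mu> t * U$r$t"
proof -
  have "(\<Sum>s\<in>UNIV. D$r$s * U$s$t) = (\<Sum>s\<in>UNIV. \<Sum>k\<in>UNIV. (U$r$k * \<mu> k * U$s$k) * U$s$t)"
    by (simp add: spectral_entry[OF assms(2)] sum_distrib_right)
  also have "\<dots> = (\<Sum>k\<in>UNIV. (U$r$k * \<mu> k) * (\<Sum>s\<in>UNIV. U$s$k * U$s$t))"
    by (subst sum.swap) (simp add: sum_distrib_left mult_ac)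
  also have "\<dots> = \<mu> t * U$r$t"
    by (simp add: orthogonal_matrix_columns_sum[OF assms(1)] if_distrib[of "\<lambda>y. _ * y"] cong: if_cong)
  finally show ?thesis .
qed

lemma spectral_symmetric:
  fixes U :: "real^'t::finite^'t"
  assumes "D = U ** diag_mat \<mu> ** transpose U"
  shows "D$s$r = D$r$s"
  by (simp add: spectral_entry[OF assms] mult_ac)

lemma spectral_column_eigenvector:
  fixes U :: "real^'t::finite^'t"
  assumes "orthogonal_matrix U" "D = U ** diag_mat \<mu> ** transpose U"
  shows "D *v column t U = \<mu> t *\<^sub>R column t U"
  by (simp add: vec_eq_iff matrix_vector_mult_def column_def spectral_mult_column[OF assms])

lemma inner_columns_orthogonal_matrix:
  fixes U :: "real^'t::finite^'t"
  assumes "orthogonal_matrix U"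
  shows "inner (column t U) (column t' U) = (if t = t' then 1 else 0)"
  by (simp add: inner_vec_def column_def orthogonal_matrix_columns_sum[OF assms])

lemma norm_diff_spectral:
  fixes U Uh :: "real^'t::finite^'t"
  assumes U: "orthogonal_matrix U" "D = U ** diag_mat \<mu> ** transpose U"
    and Uh: "orthogonal_matrix Uh" "Dh = Uh ** diag_mat \<mu>h ** transpose Uh"
  shows "(norm (Dh - D))\<^sup>2
       = (\<Sum>j\<in>UNIV. \<Sum>t\<in>UNIV. ((\<mu>h j - \<mu> t) * (transpose Uh ** U)$j$t)\<^sup>2)"
proof -
  define G where "G j s = (\<Sum>r\<in>UNIV. Uh$r$j * (Dh$r$s - D$r$s))" for j s
  have G: "(\<Sum>s\<in>UNIV. U$s$t * G j s) = (\<mu>h j - \<mu> t) * (transpose Uh ** U)$j$t" for j t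
  proof -
    have "G j s = \<mu>h j * Uh$s$j - (\<Sum>r\<in>UNIV. Uh$r$j * D$r$s)" for s
      using spectral_mult_column[OF Uh, of s j] spectral_symmetric[OF Uh(2)]
      by (simp add: G_def right_diff_distrib sum_subtractf mult.commute)
    then have "(\<Sum>s\<in>UNIV. U$s$t * G j s) = \<mu>h j * (\<Sum>s\<in>UNIV. Uh$s$j * U$s$t)
        - (\<Sum>s\<in>UNIV. \<Sum>r\<in>UNIV. Uh$r$j * (D$r$s * U$s$t))"
      by (simp add: right_diff_distrib sum_subtractf sum_distrib_left sum_distrib_right mult_ac)
    also have "(\<Sum>s\<in>UNIV. \<Sum>r\<in>UNIV. Uh$r$j * (D$r$s * U$s$t))
        = (\<Sum>r\<in>UNIV. Uh$r$j * (\<Sum>s\<in>UNIV. D$r$s * U$s$t))"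
      by (subst sum.swap) (simp add: sum_distrib_left)
    also have "\<dots> = \<mu> t * (\<Sum>r\<in>UNIV. Uh$r$j * U$r$t)"
      by (simp add: spectral_mult_column[OF U] sum_distrib_left mult_ac)
    finally show ?thesis
      by (simp add: matrix_matrix_mult_def transpose_def algebra_simps)
  qed
  have "(\<Sum>j\<in>UNIV. \<Sum>t\<in>UNIV. ((\<mu>h j - \<mu> t) * (transpose Uh ** U)$j$t)\<^sup>2)
      = (\<Sum>j\<in>UNIV. \<Sum>t\<in>UNIV. (\<Sum>s\<in>UNIV. U$s$t * G j s)\<^sup>2)"
    by (simp add: G)
  also have "\<dots> = (\<Sum>j\<in>UNIV. \<Sum>s\<in>UNIV. (G j s)\<^sup>2)"
    by (intro sum.cong refl sum_square_orthonormal_transform)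
      (simp add: orthogonal_matrix_rows_sum[OF U(1)])
  also have "\<dots> = (\<Sum>s\<in>UNIV. \<Sum>j\<in>UNIV. (\<Sum>r\<in>UNIV. Uh$r$j * (Dh$r$s - D$r$s))\<^sup>2)"
    unfolding G_def by (rule sum.swap)
  also have "\<dots> = (\<Sum>s\<in>UNIV. \<Sum>r\<in>UNIV. (Dh$r$s - D$r$s)\<^sup>2)"
    by (intro sum.cong refl sum_square_orthonormal_transform)
      (simp add: orthogonal_matrix_rows_sum[OF Uh(1)])
  also have "\<dots> = (norm (Dh - D))\<^sup>2"
    by (subst sum.swap) (simp add: norm_matrix_sq)
  finally show ?thesis ..
qed

lemma spectral_mult_vector:
  fixes U :: "real^'t::finite^'t"
  assumes "D = U ** diag_mat \<mu> ** transpose U"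
  shows "D *v x = (\<Sum>t\<in>{t. \<mu> t \<noteq> 0}. (\<mu> t * inner (column t U) x) *\<^sub>R column t U)"
proof -
  have "(D *v x)$r = (\<Sum>s\<in>UNIV. \<Sum>k\<in>UNIV. U$r$k * \<mu> k * U$s$k * x$s)" for r
    by (simp add: matrix_vector_mult_def spectral_entry[OF assms] sum_distrib_right)
  also have "\<dots> r = (\<Sum>k\<in>UNIV. \<Sum>s\<in>UNIV. U$r$k * \<mu> k * U$s$k * x$s)" for r
    by (rule sum.swap)
  also have "\<dots> r = (\<Sum>k\<in>UNIV. (\<mu> k * inner (column k U) x) * U$r$k)" for r
    by (simp add: inner_vec_def column_def sum_distrib_left sum_distrib_right mult_ac)
  also have "\<dots> r = (\<Sum>k\<in>{t. \<mu> t \<noteq> 0}. (\<mu> k * inner (column k U) x) * U$r$k)" for r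
    by (rule sum.mono_neutral_right) auto
  finally show ?thesis by (simp add: vec_eq_iff column_def)
qed

lemma rank_spectral:
  fixes U :: "real^'t::finite^'t"
  assumes U: "orthogonal_matrix U" "D = U ** diag_mat \<mu> ** transpose U"
  shows "rank D = card {t. \<mu> t \<noteq> 0}"
proof -
  define Z where "Z = {t. \<mu> t \<noteq> 0}"
  have inj: "inj_on (\<lambda>t. column t U) Z"
  proof (rule inj_onI)
    fix t t' assume "column t U = column t' U"
    then show "t = t'"
      using inner_columns_orthogonal_matrix[OF U(1), of t t'] inner_columns_orthogonal_matrix[OF U(1), of t t]
      by (auto split: if_splits)
  qed
  have indep: "independent ((\<lambda>t. column t U) ` Z)"
  proof (rule pairwise_orthogonal_independent)
    show "pairwise orthogonal ((\<lambda>t. column t U) ` Z)"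
      unfolding pairwise_def orthogonal_def using inner_columns_orthogonal_matrix[OF U(1)] by auto
    show "0 \<notin> (\<lambda>t. column t U) ` Z"
    proof
      assume "0 \<in> (\<lambda>t. column t U) ` Z"
      then obtain t where "column t U = 0" by auto
      then show False using inner_columns_orthogonal_matrix[OF U(1), of t t] by simp
    qed
  qed
  have "(\<lambda>t. column t U) ` Z \<subseteq> range (\<lambda>x. D *v x)"
  proof clarify
    fix t assume "t \<in> Z"
    have "D *v ((1 / \<mu> t) *\<^sub>R column t U) = (1 / \<mu> t) *\<^sub>R (D *v column t U)"
      by (simp add: vec_eq_iff matrix_vector_mult_def sum_distrib_left mult_ac)
    also have "\<dots> = column t U"
      using \<open>t \<in> Z\<close> by (simp add: spectral_column_eigenvector[OF U] Z_def)
    finally have "D *v ((1 / \<mu> t) *\<^sub>R column t U) = column t U" .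
    then show "column t U \<in> range (\<lambda>x. D *v x)" by (metis rangeI)
  qed
  moreover have "range (\<lambda>x. D *v x) \<subseteq> span ((\<lambda>t. column t U) ` Z)"
  proof clarify
    fix x
    show "D *v x \<in> span ((\<lambda>t. column t U) ` Z)"
      unfolding spectral_mult_vector[OF U(2)] Z_def by (intro span_sum span_scale span_base) auto
  qed
  ultimately have "dim (range (\<lambda>x. D *v x)) = card ((\<lambda>t. column t U) ` Z)"
    using independent_card_le_dim[OF _ indep] dim_le_card[of _ "(\<lambda>t. column t U) ` Z"]
    by (simp add: le_antisym)
  then show ?thesis using card_image[OF inj] by (simp add: rank_dim_range Z_def)
qed

lemma is_eigenvalue_spectral:
  fixes U :: "real^'t::finite^'t"
  assumes U: "orthogonal_matrix U" "D = U ** diag_mat \<mu> ** transpose U"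
  shows "is_eigenvalue D lam \<longleftrightarrow> (\<exists>t. \<mu> t = lam)"
proof
  assume "is_eigenvalue D lam"
  then obtain v where v: "v \<noteq> 0" "D *v v = lam *\<^sub>R v"
    unfolding is_eigenvalue_def by blast
  define w where "w = transpose U *v v"
  have "U *v w = v"
    using U(1) unfolding w_def orthogonal_matrix_def by (metis matrix_vector_mul_assoc matrix_vector_mul_lid)
  with v(1) obtain t where t: "w$t \<noteq> 0"
    by (metis matrix_vector_mult_0_right vec_eq_iff zero_index)
  have "transpose U ** D = diag_mat \<mu> ** transpose U"
    using U(1) by (simp add: U(2) matrix_mul_assoc orthogonal_matrix_def)
  then have "diag_mat \<mu> *v w = lam *\<^sub>R w"
    by (metis w_def v(2) matrix_vector_mul_assoc matrix_vector_mult_scaleR)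
  then have "\<mu> t * w$t = lam * w$t"
    by (simp add: vec_eq_iff matrix_vector_mult_def diag_mat_def
        if_distrib[of "\<lambda>y. y * _"] cong: if_cong)
  with t show "\<exists>t. \<mu> t = lam" by auto
next
  assume "\<exists>t. \<mu> t = lam"
  then obtain t where "\<mu> t = lam" by blast
  moreover have "column t U \<noteq> 0"
    using inner_columns_orthogonal_matrix[OF U(1), of t t] by auto
  ultimately show "is_eigenvalue D lam"
    unfolding is_eigenvalue_def using spectral_column_eigenvector[OF U] by blast
qed

section \<open>The orthogonal Procrustes problem\<close>

definition householder :: "real^'k::finite \<Rightarrow> real^'k^'k" where
  "householder w = (\<chi> i j. (if i = j then 1 else 0) - 2 * w$i * w$j)"

lemma householder_mult_entry:
  "(householder u ** householder w)$k$j = (if k = j then 1 else 0) - 2 * w$k * w$j - 2 * u$k * u$j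
     + 4 * inner u w * u$k * w$j"
proof -
  have "(householder u ** householder w)$k$j
      = (\<Sum>l\<in>UNIV. (if l = k then (if k = j then 1 else 0) else 0)
          - (if l = k then 2 * w$l * w$j else 0) - (if l = j then 2 * u$k * u$l else 0)
          + 4 * u$k * (u$l * w$l) * w$j)"
    unfolding matrix_matrix_mult_def householder_def by (auto intro!: sum.cong simp: algebra_simps)
  also have "\<dots> = (if k = j then 1 else 0) - 2 * w$k * w$j - 2 * u$k * u$j
      + 4 * inner u w * u$k * w$j"
    by (simp add: sum.distrib sum_subtractf inner_vec_def sum_distrib_left sum_distrib_right mult_ac)
  finally show ?thesis .
qed

lemma orthogonal_householder:
  assumes "inner w w = 1"
  shows "orthogonal_matrix (householder w)"
proof -
  have "transpose (householder w) = householder w"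
    by (simp add: householder_def transpose_def vec_eq_iff mult_ac)
  moreover have "householder w ** householder w = mat 1"
    by (simp add: vec_eq_iff householder_mult_entry assms mat_def)
  ultimately show ?thesis by (simp add: orthogonal_matrix)
qed

lemma inner_householder:
  "inner (householder w) N = trace N - 2 * inner w (N *v w)"
proof -
  have "inner (householder w) N
      = (\<Sum>k\<in>UNIV. \<Sum>j\<in>UNIV. (if k = j then N$k$j else 0) - 2 * (w$k * (N$k$j * w$j)))"
    by (auto simp: inner_matrix householder_def algebra_simps intro!: sum.cong)
  also have "\<dots> = trace N - 2 * inner w (N *v w)"
    by (simp add: sum_subtractf trace_def inner_vec_def matrix_vector_mult_def sum_distrib_left)
  finally show ?thesis .
qed

lemma inner_householder_mult:
  "inner (householder u ** householder w) N
     = trace N - 2 * inner w (N *v w) - 2 * inner u (N *v u) + 4 * inner u w * inner u (N *v w)"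
proof -
  have "inner (householder u ** householder w) N
      = (\<Sum>k\<in>UNIV. \<Sum>j\<in>UNIV. (if k = j then N$k$j else 0) - 2 * (w$k * (N$k$j * w$j))
          - 2 * (u$k * (N$k$j * u$j)) + 4 * inner u w * (u$k * (N$k$j * w$j)))"
    by (auto simp: inner_matrix householder_mult_entry algebra_simps intro!: sum.cong)
  also have "\<dots> = trace N - 2 * inner w (N *v w) - 2 * inner u (N *v u) + 4 * inner u w * inner u (N *v w)"
    by (simp add: sum_subtractf sum.distrib trace_def inner_vec_def matrix_vector_mult_def sum_distrib_left)
  finally show ?thesis .
qed

lemma trace_maximal_psd:
  fixes N :: "real^'k::finite^'k"
  assumes max: "\<And>Q. orthogonal_matrix Q \<Longrightarrow> inner Q N \<le> trace N"
  shows "0 \<le> inner u (N *v u)"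
proof (cases "u = 0")
  case False
  define w where "w = (1 / norm u) *\<^sub>R u"
  have w1: "inner w w = 1"
    using False by (simp add: w_def power2_norm_eq_inner[symmetric] power_divide)
  have "0 \<le> inner w (N *v w)"
    using max[OF orthogonal_householder[OF w1]] inner_householder[of w N] by simp
  also have "inner w (N *v w) = inner u (N *v u) / (norm u)\<^sup>2"
    by (simp add: w_def matrix_vector_mult_scaleR power2_eq_square)
  finally show ?thesis using False by (simp add: zero_le_divide_iff)
qed simp

lemma exists_unit_pair_cross_term_dominates:
  fixes a d :: real
  assumes "0 \<le> a" "d \<noteq> 0"
  obtains x y where "x\<^sup>2 + y\<^sup>2 = 1" "y\<^sup>2 * a < x * y * d"
proof
  define r where "r = sqrt ((a + 1)\<^sup>2 + d\<^sup>2)"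
  have r: "0 < r" "r\<^sup>2 = (a + 1)\<^sup>2 + d\<^sup>2"
    using assms by (simp_all add: r_def add_pos_nonneg)
  show "((a + 1) / r)\<^sup>2 + (d / r)\<^sup>2 = 1"
    using r assms(1) by (simp add: power_divide add_divide_distrib[symmetric])
  have "(d / r)\<^sup>2 * a < (d / r)\<^sup>2 * (a + 1)"
    using r assms by (intro mult_strict_left_mono) auto
  also have "\<dots> = (a + 1) / r * (d / r) * d"
    by (simp add: power2_eq_square)
  finally show "(d / r)\<^sup>2 * a < (a + 1) / r * (d / r) * d" .
qed

lemma trace_maximal_symmetric:
  fixes N :: "real^'k::finite^'k"
  assumes max: "\<And>Q. orthogonal_matrix Q \<Longrightarrow> inner Q N \<le> trace N"
  shows "transpose N = N"
proof (rule ccontr)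
  assume "transpose N \<noteq> N"
  then obtain p q where ne: "N$p$q \<noteq> N$q$p"
    by (auto simp: vec_eq_iff transpose_def)
  then have pq: "p \<noteq> q" by auto
  define d where "d = N$p$q - N$q$p"
  define a where "a = N$p$p + N$q$q"
  have "0 \<le> a"
    using trace_maximal_psd[OF max, of "axis p 1"] trace_maximal_psd[OF max, of "axis q 1"]
    by (simp add: a_def matrix_vector_mult_basis inner_axis' column_def)
  have "d \<noteq> 0" using ne by (simp add: d_def)
  then obtain x y where xy: "x\<^sup>2 + y\<^sup>2 = 1" "y\<^sup>2 * a < x * y * d"
    using exists_unit_pair_cross_term_dominates[OF \<open>0 \<le> a\<close>] by blast
  \<comment> \<open>A product of two reflections, rotating in the plane spanned by the axes p and q.\<close>
  define u where "u = axis p (1::real)"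
  define w where "w = x *\<^sub>R axis p 1 + y *\<^sub>R axis q (1::real)"
  have "inner u u = 1" "inner w w = 1"
    using pq xy(1) by (simp_all add: u_def w_def inner_add_left inner_add_right inner_axis_axis power2_eq_square)
  then have "inner (householder u ** householder w) N \<le> trace N"
    by (intro max orthogonal_matrix_mul orthogonal_householder)
  moreover have "axis q (1::real) $ p = 0" "axis p (1::real) $ q = 0"
    using pq by (simp_all add: axis_def)
  ultimately have "x * x * N$p$p + x * y * N$p$q \<le> N$p$p + x * y * N$q$p + y * y * N$q$q"
    using pq
    by (simp add: inner_householder_mult u_def w_def inner_add_left inner_add_right
        matrix_vector_right_distrib matrix_vector_mult_scaleR matrix_vector_mult_basis inner_axis'
        inner_axis_axis column_def power2_eq_square algebra_simps)
  moreover have "x * x * N$p$p = N$p$p - y * y * N$p$p"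
    using xy(1) by (metis add_diff_cancel_right' left_diff_distrib mult_1 power2_eq_square)
  ultimately have "x * y * d \<le> y\<^sup>2 * a"
    by (simp add: a_def d_def power2_eq_square algebra_simps)
  with xy(2) show False by simp
qed

lemma psd_contraction_column_bound:
  fixes N :: "real^'k::finite^'k"
  assumes sym: "transpose N = N"
    and psd: "\<And>u. 0 \<le> inner u (N *v u)"
    and contr: "\<And>x. norm (N *v x) \<le> norm x"
  shows "(norm (column i N))\<^sup>2 \<le> N$i$i"
proof -
  define y where "y = column i N"
  define d where "d = axis i (1::real)"
  have Nd: "N *v d = y" by (simp add: d_def y_def matrix_vector_mult_basis)
  have "inner d (N *v y) = inner (row i N) y"
    by (simp add: d_def inner_axis' matrix_mult_dot row_def)
  also have "row i N = y"
    using sym by (metis y_def column_transpose)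
  finally have dNy: "inner d (N *v y) = inner y y" .
  have "inner y (N *v y) \<le> norm y * norm (N *v y)" by (rule norm_cauchy_schwarz)
  also have "\<dots> \<le> norm y * norm y" by (simp add: contr mult_left_mono)
  finally have yNy: "inner y (N *v y) \<le> inner y y" by (simp add: norm_eq_sqrt_inner)
  have "0 \<le> inner (d - y) (N *v (d - y))" by (rule psd)
  also have "\<dots> = inner d (N *v d) - inner d (N *v y) - inner y (N *v d) + inner y (N *v y)"
    by (simp add: matrix_vector_mult_diff_distrib inner_diff_left inner_diff_right)
  also have "inner d (N *v d) = N$i$i"
    by (simp add: d_def matrix_vector_mult_basis inner_axis' column_def)
  finally show ?thesis
    using dNy yNy by (simp add: Nd power2_norm_eq_inner y_def)
qed

lemma exists_orthogonal_maximizer: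
  fixes M :: "real^'k::finite^'k"
  obtains R where "orthogonal_matrix R" "\<And>Q. orthogonal_matrix Q \<Longrightarrow> inner Q M \<le> inner R M"
proof -
  let ?S = "{R::real^'k^'k. transpose R ** R = mat 1}"
  have "continuous_on UNIV (\<lambda>R::real^'k^'k. transpose R ** R)"
    unfolding matrix_matrix_mult_def transpose_def by (intro continuous_intros)
  then have "closed ?S"
    by (rule closed_Collect_eq) (intro continuous_intros)
  moreover have "bounded ?S"
  proof -
    have "norm R \<le> real CARD('k)" if "R \<in> ?S" for R :: "real^'k^'k"
    proof -
      have "norm R = sqrt (real CARD('k))"
        using that by (simp add: norm_eq_sqrt_inner inner_self_matrix trace_I)
      also have "\<dots> \<le> real CARD('k)"
        by (simp add: real_sqrt_le_iff' power2_eq_square)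
      finally show ?thesis .
    qed
    then show ?thesis unfolding bounded_iff by blast
  qed
  moreover have "mat 1 \<in> ?S" by (simp add: transpose_mat)
  moreover have "continuous_on ?S (\<lambda>R. inner R M)" by (intro continuous_intros)
  ultimately obtain R where "R \<in> ?S" "\<forall>Q\<in>?S. inner Q M \<le> inner R M"
    using continuous_attains_sup[of ?S "\<lambda>R. inner R M"] compact_eq_bounded_closed by blast
  then show ?thesis using that unfolding orthogonal_matrix by blast
qed

lemma inner_mat1: "inner (mat 1) N = trace (N::real^'k::finite^'k)"
  by (simp add: inner_matrix mat_def trace_def if_distrib[of "\<lambda>y. y * _"] cong: if_cong)

lemma procrustes_contraction:
  fixes M :: "real^'k::finite^'k"
  assumes contr: "\<And>x. norm (M *v x) \<le> norm x"
  obtains R where "orthogonal_matrix R" "(norm M)\<^sup>2 \<le> inner R M"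
proof -
  obtain R where R: "orthogonal_matrix R"
    and max: "\<And>Q. orthogonal_matrix Q \<Longrightarrow> inner Q M \<le> inner R M"
    using exists_orthogonal_maximizer by blast
  define N where "N = transpose R ** M"
  have RR: "R ** transpose R = mat 1" using R by (simp add: orthogonal_matrix_def)
  have trN: "trace N = inner R M"
    using inner_matrix_mul_left[of R "mat 1" M] by (simp add: N_def inner_mat1)
  have maxN: "inner Q N \<le> trace N" if "orthogonal_matrix Q" for Q
    using max[OF orthogonal_matrix_mul[OF R that]] inner_matrix_mul_left[of R Q M] trN
    by (simp add: N_def)
  have contrN: "norm (N *v x) \<le> norm x" for x
    using norm_orthonormal_columns_mult[of "transpose R" "M *v x"] contr[of x] RR
    by (simp add: N_def matrix_vector_mul_assoc)
  have "(norm M)\<^sup>2 = (norm N)\<^sup>2"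
    using inner_matrix_mul_left[of "transpose R" M N] RR
    by (simp add: power2_norm_eq_inner N_def matrix_mul_assoc)
  also have "\<dots> = (\<Sum>i\<in>UNIV. \<Sum>k\<in>UNIV. (N$k$i)\<^sup>2)"
    unfolding norm_matrix_sq by (rule sum.swap)
  also have "\<dots> = (\<Sum>i\<in>UNIV. (norm (column i N))\<^sup>2)"
    unfolding power2_norm_eq_inner by (simp add: inner_vec_def column_def power2_eq_square)
  also have "\<dots> \<le> (\<Sum>i\<in>UNIV. N$i$i)"
    by (intro sum_mono psd_contraction_column_bound trace_maximal_symmetric trace_maximal_psd
        maxN contrN)
  also have "\<dots> = inner R M" by (simp add: trN[symmetric] trace_def)
  finally show ?thesis using R that by blast
qed

lemma orthonormal_columns_procrustes:
  fixes V Vh :: "real^'k::finite^'t::finite"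
  assumes V: "transpose V ** V = mat 1" and Vh: "transpose Vh ** Vh = mat 1"
  obtains R where "orthogonal_matrix R"
    "(norm (Vh ** R - V))\<^sup>2 \<le> 2 * (real CARD('k) - (norm (transpose Vh ** V))\<^sup>2)"
proof -
  have "norm ((transpose Vh ** V) *v x) \<le> norm x" for x
    using norm_transpose_orthonormal_columns_mult_le[OF Vh, of "V *v x"]
      norm_orthonormal_columns_mult[OF V, of x]
    by (simp add: matrix_vector_mul_assoc[symmetric])
  then obtain R where R: "orthogonal_matrix R"
    and RM: "(norm (transpose Vh ** V))\<^sup>2 \<le> inner R (transpose Vh ** V)"
    by (rule procrustes_contraction)
  have "inner (Vh ** R) (Vh ** R) = inner R R"
    using inner_matrix_mul_left[of Vh R "Vh ** R"] by (metis Vh matrix_mul_assoc matrix_mul_lid)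
  also have "\<dots> = real CARD('k)"
    using R by (simp add: inner_self_matrix trace_I orthogonal_matrix_def)
  finally have "inner (Vh ** R) (Vh ** R) = real CARD('k)" .
  moreover have "inner V V = real CARD('k)"
    by (simp add: inner_self_matrix V trace_I)
  moreover have "inner (Vh ** R) V = inner R (transpose Vh ** V)"
    by (rule inner_matrix_mul_left)
  ultimately have "(norm (Vh ** R - V))\<^sup>2 = 2 * real CARD('k) - 2 * inner R (transpose Vh ** V)"
    unfolding power2_norm_eq_inner by (simp add: inner_diff_left inner_diff_right inner_commute[of V "Vh ** R"])
  with R RM that show ?thesis by simp
qed

section \<open>The Davis-Kahan bound\<close>

lemma orthogonal_matrix_block_sq_sum:
  fixes B :: "real^'n::finite^'n"
  assumes "orthogonal_matrix B"
  shows "(\<Sum>j\<in>J. \<Sum>t\<in>S. (B$j$t)\<^sup>2) + (\<Sum>j\<in>-J. \<Sum>t\<in>S. (B$j$t)\<^sup>2) = card S"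
proof -
  have "(\<Sum>j\<in>J. \<Sum>t\<in>S. (B$j$t)\<^sup>2) + (\<Sum>j\<in>-J. \<Sum>t\<in>S. (B$j$t)\<^sup>2)
      = (\<Sum>j\<in>UNIV. \<Sum>t\<in>S. (B$j$t)\<^sup>2)"
    by (simp add: Compl_eq_Diff_UNIV sum.subset_diff[of J UNIV])
  also have "\<dots> = (\<Sum>t\<in>S. \<Sum>j\<in>UNIV. B$j$t * B$j$t)"
    by (subst sum.swap) (simp add: power2_eq_square)
  also have "\<dots> = card S"
    by (simp add: orthogonal_matrix_columns_sum[OF assms])
  finally show ?thesis .
qed

lemma orthogonal_matrix_offdiagonal_blocks:
  fixes B :: "real^'n::finite^'n"
  assumes "orthogonal_matrix B" "card J = card S"
  shows "(\<Sum>j\<in>-J. \<Sum>t\<in>S. (B$j$t)\<^sup>2) = (\<Sum>j\<in>J. \<Sum>t\<in>-S. (B$j$t)\<^sup>2)"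
proof -
  have "(\<Sum>t\<in>S. \<Sum>j\<in>J. (B$j$t)\<^sup>2) + (\<Sum>t\<in>-S. \<Sum>j\<in>J. (B$j$t)\<^sup>2) = card J"
    using orthogonal_matrix_block_sq_sum[OF orthogonal_matrix_transpose[THEN iffD2, OF assms(1)],
        where J=S and S=J]
    by (simp add: transpose_def)
  then show ?thesis
    using orthogonal_matrix_block_sq_sum[OF assms(1), where J=J and S=S] assms(2)
    by (simp add: sum.swap[of _ S] sum.swap[of _ "-S"])
qed

lemma selected_columns_orthonormal:
  fixes U :: "real^'t::finite^'t" and V :: "real^'k::finite^'t"
  assumes "orthogonal_matrix U" "inj e" "\<And>r c. V$r$c = U$r$(e c)"
  shows "transpose V ** V = mat 1"
  using assms
  by (simp add: vec_eq_iff matrix_matrix_mult_def transpose_def mat_def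
      orthogonal_matrix_columns_sum inj_eq)

lemma norm_selected_columns_overlap:
  fixes U Uh :: "real^'t::finite^'t" and V Vh :: "real^'k::finite^'t"
  assumes "orthogonal_matrix U" "orthogonal_matrix Uh" "inj e" "inj eh"
    and V: "\<And>r c. V$r$c = U$r$(e c)" and Vh: "\<And>r c. Vh$r$c = Uh$r$(eh c)"
  shows "(norm (transpose Vh ** V))\<^sup>2
       = real CARD('k) - (\<Sum>j\<in>-range eh. \<Sum>t\<in>range e. ((transpose Uh ** U)$j$t)\<^sup>2)"
proof -
  let ?B = "transpose Uh ** U"
  have "orthogonal_matrix ?B"
    using assms(1,2) by (simp add: orthogonal_matrix_mul)
  have "(norm (transpose Vh ** V))\<^sup>2 = (\<Sum>c'\<in>UNIV. \<Sum>c\<in>UNIV. (?B$(eh c')$(e c))\<^sup>2)"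
    by (simp add: norm_matrix_sq matrix_matrix_mult_def transpose_def V Vh)
  also have "\<dots> = (\<Sum>j\<in>range eh. \<Sum>t\<in>range e. (?B$j$t)\<^sup>2)"
    using assms(3,4) by (simp add: sum.reindex)
  also have "\<dots> = real CARD('k) - (\<Sum>j\<in>-range eh. \<Sum>t\<in>range e. (?B$j$t)\<^sup>2)"
    using orthogonal_matrix_block_sq_sum[OF \<open>orthogonal_matrix ?B\<close>, where J="range eh" and S="range e"]
      assms(3) by (simp add: card_image)
  finally show ?thesis .
qed

lemma gap_weighted_sq_sum:
  fixes a b :: "'j::finite \<Rightarrow> 't::finite \<Rightarrow> real"
  assumes gap: "\<And>j t. j \<in> J \<Longrightarrow> t \<in> S \<Longrightarrow> c \<le> \<bar>a j t\<bar>" and "0 \<le> c"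
  shows "c\<^sup>2 * (\<Sum>j\<in>J. \<Sum>t\<in>S. (b j t)\<^sup>2) \<le> (\<Sum>j\<in>UNIV. \<Sum>t\<in>UNIV. (a j t * b j t)\<^sup>2)"
proof -
  have "c\<^sup>2 * (b j t)\<^sup>2 \<le> (a j t * b j t)\<^sup>2" if "j \<in> J" "t \<in> S" for j t
    using mult_right_mono[OF power_mono[OF gap[OF that] \<open>0 \<le> c\<close>, of 2] zero_le_power2[of "b j t"]]
    by (simp add: power_mult_distrib)
  then have "c\<^sup>2 * (\<Sum>j\<in>J. \<Sum>t\<in>S. (b j t)\<^sup>2) \<le> (\<Sum>j\<in>J. \<Sum>t\<in>S. (a j t * b j t)\<^sup>2)"
    by (simp add: sum_distrib_left sum_mono)
  also have "\<dots> \<le> (\<Sum>j\<in>J. \<Sum>t\<in>UNIV. (a j t * b j t)\<^sup>2)"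
    by (intro sum_mono sum_mono2) auto
  also have "\<dots> \<le> (\<Sum>j\<in>UNIV. \<Sum>t\<in>UNIV. (a j t * b j t)\<^sup>2)"
    by (intro sum_mono2 sum_nonneg) auto
  finally show ?thesis .
qed

lemma sin_theta_bound:
  fixes U Uh :: "real^'t::finite^'t" and e eh :: "'k::finite \<Rightarrow> 't"
  assumes U: "orthogonal_matrix U" "D = U ** diag_mat \<mu> ** transpose U"
    and Uh: "orthogonal_matrix Uh" "Dh = Uh ** diag_mat \<mu>h ** transpose Uh"
    and "inj e" "inj eh"
    and zero: "\<And>t. t \<notin> range e \<Longrightarrow> \<mu> t = 0"
    and gap: "\<And>c. \<gamma> \<le> \<bar>\<mu> (e c)\<bar>" and "0 \<le> \<gamma>"
    and top: "\<And>c t. t \<notin> range eh \<Longrightarrow> \<bar>\<mu>h t\<bar> \<le> \<bar>\<mu>h (eh c)\<bar>"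
  shows "\<gamma>\<^sup>2 * (\<Sum>j\<in>-range eh. \<Sum>t\<in>range e. ((transpose Uh ** U)$j$t)\<^sup>2) \<le> 4 * (norm (Dh - D))\<^sup>2"
proof -
  let ?B = "transpose Uh ** U"
  let ?X = "\<Sum>j\<in>-range eh. \<Sum>t\<in>range e. (?B$j$t)\<^sup>2"
  have "(\<gamma> / 2)\<^sup>2 * ?X \<le> (norm (Dh - D))\<^sup>2"
  proof (cases "\<forall>j\<in>-range eh. \<bar>\<mu>h j\<bar> \<le> \<gamma> / 2")
    case True
    have "\<gamma> / 2 \<le> \<bar>\<mu>h j - \<mu> (e c)\<bar>" if "j \<in> -range eh" for j c
    proof -
      have "\<bar>\<mu>h j\<bar> \<le> \<gamma> / 2" using True that by blast
      then show ?thesis using gap[of c] by arith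
    qed
    then show ?thesis
      unfolding norm_diff_spectral[OF U Uh] using \<open>0 \<le> \<gamma>\<close> by (intro gap_weighted_sq_sum) auto
  next
    \<comment> \<open>Then all selected eigenvalues of Dh exceed \<gamma>/2, while D vanishes off its selection.\<close>
    case False
    then obtain j0 where j0: "j0 \<notin> range eh" "\<gamma> / 2 < \<bar>\<mu>h j0\<bar>" by auto
    have "\<gamma> / 2 \<le> \<bar>\<mu>h (eh c) - \<mu> t\<bar>" if "t \<in> -range e" for c t
      using top[OF j0(1), of c] j0(2) zero[of t] that by simp
    then have "(\<gamma> / 2)\<^sup>2 * (\<Sum>j\<in>range eh. \<Sum>t\<in>-range e. (?B$j$t)\<^sup>2) \<le> (norm (Dh - D))\<^sup>2"
      unfolding norm_diff_spectral[OF U Uh] using \<open>0 \<le> \<gamma>\<close> by (intro gap_weighted_sq_sum) auto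
    moreover have "?X = (\<Sum>j\<in>range eh. \<Sum>t\<in>-range e. (?B$j$t)\<^sup>2)"
      using assms(5,6) U(1) Uh(1)
      by (intro orthogonal_matrix_offdiagonal_blocks) (simp_all add: orthogonal_matrix_mul card_image)
    ultimately show ?thesis by simp
  qed
  then show ?thesis by (simp add: power_divide)
qed

lemma nonzero_eigenvalues_selected:
  fixes U :: "real^'t::finite^'t" and e :: "'k::finite \<Rightarrow> 't"
  assumes U: "orthogonal_matrix U" "D = U ** diag_mat \<mu> ** transpose U"
    and "inj e" and top: "\<And>c t. t \<notin> range e \<Longrightarrow> \<bar>\<mu> t\<bar> \<le> \<bar>\<mu> (e c)\<bar>"
    and rank: "rank D = CARD('k)"
  shows "{t. \<mu> t \<noteq> 0} = range e"
proof -
  have card: "card {t. \<mu> t \<noteq> 0} = card (range e)"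
    using rank rank_spectral[OF U] \<open>inj e\<close> by (simp add: card_image)
  have "{t. \<mu> t \<noteq> 0} \<subseteq> range e"
  proof
    fix t assume t: "t \<in> {t. \<mu> t \<noteq> 0}"
    show "t \<in> range e"
    proof (rule ccontr)
      assume "t \<notin> range e"
      then have "\<mu> (e c) \<noteq> 0" for c
        using t top[of t c] by auto
      then have "insert t (range e) \<subseteq> {t. \<mu> t \<noteq> 0}"
        using t by auto
      then have "card (insert t (range e)) \<le> card (range e)"
        using card by (metis card_mono finite)
      with \<open>t \<notin> range e\<close> show False by simp
    qed
  qed
  then show ?thesis using card by (metis card_subset_eq finite)
qed

lemma top_abs_eigvecs_orthonormal:
  assumes "top_abs_eigvecs D (V::real^'k::finite^'t::finite)"
  shows "transpose V ** V = mat 1"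
  using assms selected_columns_orthonormal unfolding top_abs_eigvecs_def by metis

lemma top_abs_eigvecs_sin_theta:
  fixes D Dh :: "real^'t::finite^'t" and V Vh :: "real^'k::finite^'t"
  assumes rank: "rank D = CARD('k)"
    and V: "top_abs_eigvecs D V" and Vh: "top_abs_eigvecs Dh Vh"
    and gamma: "\<gamma> = Min {\<bar>lam\<bar> | lam. lam \<noteq> 0 \<and> is_eigenvalue D lam}"
  shows "0 < \<gamma>" and "\<gamma>\<^sup>2 * (real CARD('k) - (norm (transpose Vh ** V))\<^sup>2) \<le> 4 * (norm (Dh - D))\<^sup>2"
proof -
  obtain U \<mu> and e :: "'k \<Rightarrow> 't" where U: "orthogonal_matrix U" "D = U ** diag_mat \<mu> ** transpose U"
    and e: "inj e" "\<And>r c. V$r$c = U$r$(e c)" "\<And>c t. t \<notin> range e \<Longrightarrow> \<bar>\<mu> t\<bar> \<le> \<bar>\<mu> (e c)\<bar>"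
    using V unfolding top_abs_eigvecs_def by blast
  obtain Uh \<mu>h and eh :: "'k \<Rightarrow> 't" where Uh: "orthogonal_matrix Uh" "Dh = Uh ** diag_mat \<mu>h ** transpose Uh"
    and eh: "inj eh" "\<And>r c. Vh$r$c = Uh$r$(eh c)" "\<And>c t. t \<notin> range eh \<Longrightarrow> \<bar>\<mu>h t\<bar> \<le> \<bar>\<mu>h (eh c)\<bar>"
    using Vh unfolding top_abs_eigvecs_def by blast
  have sel: "{t. \<mu> t \<noteq> 0} = range e"
    using nonzero_eigenvalues_selected[OF U e(1) e(3) rank] .
  have "{\<bar>lam\<bar> | lam. lam \<noteq> 0 \<and> is_eigenvalue D lam} = (\<lambda>t. \<bar>\<mu> t\<bar>) ` {t. \<mu> t \<noteq> 0}"
    by (auto simp: is_eigenvalue_spectral[OF U])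
  then have "\<gamma> = Min (range (\<lambda>c. \<bar>\<mu> (e c)\<bar>))"
    by (simp add: gamma sel image_image)
  then have \<gamma>: "\<gamma> \<le> \<bar>\<mu> (e c)\<bar>" "0 < \<gamma>" for c
    using sel by auto
  then show "0 < \<gamma>" by blast
  have "\<gamma>\<^sup>2 * (\<Sum>j\<in>-range eh. \<Sum>t\<in>range e. ((transpose Uh ** U)$j$t)\<^sup>2)
      \<le> 4 * (norm (Dh - D))\<^sup>2"
    using sel \<gamma> by (intro sin_theta_bound[OF U Uh e(1) eh(1) _ _ _ eh(3)]) auto
  then show "\<gamma>\<^sup>2 * (real CARD('k) - (norm (transpose Vh ** V))\<^sup>2) \<le> 4 * (norm (Dh - D))\<^sup>2"
    by (simp add: norm_selected_columns_overlap[OF U(1) Uh(1) e(1) eh(1) e(2) eh(2)])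
qed

section \<open>Distance matrices\<close>

lemma dist_mat_perturbation:
  fixes P Ph :: "'t::finite \<Rightarrow> real^'n::finite^'n"
  shows "(norm (dist_mat Ph - dist_mat P))\<^sup>2
     \<le> 4 * real CARD('t) * (\<Sum>i\<in>UNIV. (frob (Ph i - P i))\<^sup>2)"
proof -
  define a where "a i = norm (Ph i - P i)" for i
  have entry: "(dist_mat Ph $r$s - dist_mat P $r$s)\<^sup>2 \<le> 2 * (a r)\<^sup>2 + 2 * (a s)\<^sup>2" for r s
  proof -
    have "\<bar>dist_mat Ph $r$s - dist_mat P $r$s\<bar> = \<bar>norm (Ph r - Ph s) - norm (P r - P s)\<bar>"
      by (simp add: dist_mat_def frob_eq_norm)
    also have "\<dots> \<le> norm ((Ph r - Ph s) - (P r - P s))" by (rule norm_triangle_ineq3)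
    also have "(Ph r - Ph s) - (P r - P s) = (Ph r - P r) - (Ph s - P s)" by (simp add: algebra_simps)
    also have "norm \<dots> \<le> a r + a s" unfolding a_def by (rule norm_triangle_ineq4)
    finally have "(dist_mat Ph $r$s - dist_mat P $r$s)\<^sup>2 \<le> (a r + a s)\<^sup>2"
      by (metis abs_ge_zero power2_abs power_mono)
    also have "\<dots> \<le> 2 * (a r)\<^sup>2 + 2 * (a s)\<^sup>2"
      using zero_le_power2[of "a r - a s"] unfolding power2_sum power2_diff by linarith
    finally show ?thesis .
  qed
  have "(norm (dist_mat Ph - dist_mat P))\<^sup>2
      \<le> (\<Sum>r\<in>(UNIV::'t set). \<Sum>s\<in>(UNIV::'t set). 2 * (a r)\<^sup>2 + 2 * (a s)\<^sup>2)"
    unfolding norm_matrix_sq by (intro sum_mono) (simp add: entry)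
  also have "\<dots> = 4 * real CARD('t) * (\<Sum>i\<in>UNIV. (a i)\<^sup>2)"
    by (simp add: sum.distrib sum_distrib_left[symmetric] algebra_simps)
  finally show ?thesis by (simp add: a_def frob_eq_norm)
qed

theorem theorem1:
  fixes P Ph :: "'t::finite \<Rightarrow> real^'n::finite^'n"
    and V Vh :: "real^'k::finite^'t"
    and \<gamma> :: real
  assumes rankD: "rank (dist_mat P) = CARD('k)"
    and V: "top_abs_eigvecs (dist_mat P) V"
    and Vh: "top_abs_eigvecs (dist_mat Ph) Vh"
    and gamma: "\<gamma> = Min {\<bar>lam\<bar> | lam. lam \<noteq> 0 \<and> is_eigenvalue (dist_mat P) lam}"
  shows "\<exists>Oh::real^'k^'k. orthogonal_matrix Oh \<and>
           (frob (Vh ** Oh - V))\<^sup>2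
             \<le> 64 * real CARD('t) / \<gamma>\<^sup>2 * (\<Sum>i\<in>UNIV. (frob (Ph i - P i))\<^sup>2)"
proof -
  define X where "X = real CARD('k) - (norm (transpose Vh ** V))\<^sup>2"
  define S where "S = (\<Sum>i\<in>UNIV. (frob (Ph i - P i))\<^sup>2)"
  obtain R where R: "orthogonal_matrix R" "(frob (Vh ** R - V))\<^sup>2 \<le> 2 * X"
    using orthonormal_columns_procrustes[OF top_abs_eigvecs_orthonormal[OF V]
        top_abs_eigvecs_orthonormal[OF Vh]]
    unfolding X_def frob_eq_norm by blast
  have "\<gamma>\<^sup>2 * X \<le> 4 * (norm (dist_mat Ph - dist_mat P))\<^sup>2"
    unfolding X_def by (rule top_abs_eigvecs_sin_theta(2)[OF rankD V Vh gamma])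
  also have "\<dots> \<le> 16 * (real CARD('t) * S)"
    using dist_mat_perturbation[of Ph P] by (simp add: S_def)
  finally have "\<gamma>\<^sup>2 * (2 * X) \<le> 32 * (real CARD('t) * S)" by (simp add: algebra_simps)
  also have "\<dots> \<le> 64 * (real CARD('t) * S)"
    unfolding S_def by (intro mult_right_mono mult_nonneg_nonneg sum_nonneg) auto
  finally have "2 * X \<le> 64 * real CARD('t) / \<gamma>\<^sup>2 * S"
    using top_abs_eigvecs_sin_theta(1)[OF rankD V Vh gamma] by (simp add: field_simps)
  with R show ?thesis unfolding S_def by auto
qed

end
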